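(* Let $H$ be an undirected graph and let $\vec H$ be any acyclic orientation of $H$. Then $\mathrm{dtw}(\vec H)\le\mathrm{tw}(H)+1$.
   Context: For a DAG $\vec H$, a source is a vertex of in-degree $0$; $S$ denotes the set of sources; $R(s)$ is the set of vertices reachable from $s$, and $R(B)=\bigcup_{s\in B}R(s)$. A DAG tree decomposition of $\vec H$ is a tree $T$ whose nodes (bags) are subsets of $S$ such that every source lies in some bag and, for any bags $B,B_1,B_2$ with $B$ on the path between $B_1$ and $B_2$ in $T$, $R(B_1)\cap R(B_2)\subseteq R(B)$; its width is the maximum bag size and $\mathrm{dtw}(\vec H)$ is the minimum width. $\mathrm{tw}$ is the usual treewidth. *)

theory Defs
  imports Main
begin

definition ugraph :: "'a set \<Rightarrow> ('a \<times> 'a) set \<Rightarrow> bool" where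
  "ugraph V E \<longleftrightarrow> finite V \<and> E \<subseteq> V \<times> V \<and> sym E \<and> irrefl E"

definition orientation :: "('a \<times> 'a) set \<Rightarrow> ('a \<times> 'a) set \<Rightarrow> bool" where
  "orientation E D \<longleftrightarrow> D \<subseteq> E \<and>
     (\<forall>u v. (u, v) \<in> E \<longrightarrow> ((u, v) \<in> D \<longleftrightarrow> (v, u) \<notin> D))"

definition spath :: "'n set \<Rightarrow> ('n \<times> 'n) set \<Rightarrow> 'n \<Rightarrow> 'n \<Rightarrow> 'n list \<Rightarrow> bool" where
  "spath N TE a b p \<longleftrightarrow> p \<noteq> [] \<and> hd p = a \<and> last p = b \<and> distinct p \<and>
     set p \<subseteq> N \<and> (\<forall>i. Suc i < length p \<longrightarrow> (p ! i, p ! Suc i) \<in> TE)"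

definition is_tree :: "'n set \<Rightarrow> ('n \<times> 'n) set \<Rightarrow> bool" where
  "is_tree N TE \<longleftrightarrow> finite N \<and> N \<noteq> {} \<and> TE \<subseteq> N \<times> N \<and> sym TE \<and> irrefl TE \<and>
     (\<forall>a\<in>N. \<forall>b\<in>N. \<exists>!p. spath N TE a b p)"

definition on_path :: "'n set \<Rightarrow> ('n \<times> 'n) set \<Rightarrow> 'n \<Rightarrow> 'n \<Rightarrow> 'n \<Rightarrow> bool" where
  "on_path N TE t1 t2 t \<longleftrightarrow> (\<exists>p. spath N TE t1 t2 p \<and> t \<in> set p)"

definition tree_decomp ::
  "'a set \<Rightarrow> ('a \<times> 'a) set \<Rightarrow> 'n set \<Rightarrow> ('n \<times> 'n) set \<Rightarrow> ('n \<Rightarrow> 'a set) \<Rightarrow> bool" where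
  "tree_decomp V E N TE X \<longleftrightarrow> is_tree N TE \<and>
     (\<forall>t\<in>N. X t \<subseteq> V) \<and>
     (\<forall>v\<in>V. \<exists>t\<in>N. v \<in> X t) \<and>
     (\<forall>(u, v)\<in>E. \<exists>t\<in>N. u \<in> X t \<and> v \<in> X t) \<and>
     (\<forall>t1\<in>N. \<forall>t2\<in>N. \<forall>t\<in>N. on_path N TE t1 t2 t \<longrightarrow> X t1 \<inter> X t2 \<subseteq> X t)"

text \<open>Treewidth: minimum over tree decompositions of (maximum bag size - 1).
Tree nodes are taken from nat, which is no restriction for finite trees.\<close>
definition treewidth :: "'a set \<Rightarrow> ('a \<times> 'a) set \<Rightarrow> int" where
  "treewidth V E = int (LEAST k. \<exists>(N :: nat set) TE X. tree_decomp V E N TE X \<and>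
       (\<forall>t\<in>N. card (X t) \<le> k)) - 1"

definition sources :: "'a set \<Rightarrow> ('a \<times> 'a) set \<Rightarrow> 'a set" where
  "sources V D = {s \<in> V. \<forall>u. (u, s) \<notin> D}"

definition reach :: "('a \<times> 'a) set \<Rightarrow> 'a \<Rightarrow> 'a set" where
  "reach D s = {v. (s, v) \<in> D\<^sup>*}"

definition reach_set :: "('a \<times> 'a) set \<Rightarrow> 'a set \<Rightarrow> 'a set" where
  "reach_set D B = (\<Union>s\<in>B. reach D s)"

definition dag_tree_decomp ::
  "'a set \<Rightarrow> ('a \<times> 'a) set \<Rightarrow> 'n set \<Rightarrow> ('n \<times> 'n) set \<Rightarrow> ('n \<Rightarrow> 'a set) \<Rightarrow> bool" where
  "dag_tree_decomp V D N TE X \<longleftrightarrow> is_tree N TE \<and>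
     (\<forall>t\<in>N. X t \<subseteq> sources V D) \<and>
     (\<forall>s\<in>sources V D. \<exists>t\<in>N. s \<in> X t) \<and>
     (\<forall>t1\<in>N. \<forall>t2\<in>N. \<forall>t\<in>N. on_path N TE t1 t2 t \<longrightarrow>
        reach_set D (X t1) \<inter> reach_set D (X t2) \<subseteq> reach_set D (X t))"

definition dag_treewidth :: "'a set \<Rightarrow> ('a \<times> 'a) set \<Rightarrow> nat" where
  "dag_treewidth V D = (LEAST k. \<exists>(N :: nat set) TE X. dag_tree_decomp V D N TE X \<and>
       (\<forall>t\<in>N. card (X t) \<le> k))"

end

theory Submission
  imports Defs
begin

text \<open>Take an optimal tree decomposition of \<open>H\<close> and replace every vertex \<open>w\<close> in
every bag by a canonical source \<open>s w\<close> reaching it, namely the source reaching \<open>w\<close> of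
least rank under a fixed injective ranking of the vertices. Bags do not grow. For the DAG separation property fix a
vertex \<open>v\<close> and let \<open>W\<close> be the set of vertices \<open>w\<close> with \<open>v\<close> reachable from \<open>s w\<close>.
Every vertex \<open>x\<close> on a directed path from \<open>s w\<close> to \<open>w\<close> has \<open>s x = s w\<close> (this is why
\<open>s\<close> takes the least rank rather than an arbitrary source), and
every vertex on a directed path from \<open>s w\<close> to \<open>v\<close> lies in \<open>W\<close>, so \<open>W\<close> is
connected in \<open>H\<close>. The bags meeting a connected vertex set form a subtree, hence
every bag on the tree path between bags containing \<open>w\<^sub>1, w\<^sub>2 \<in> W\<close> contains some
\<open>z \<in> W\<close>, and \<open>v\<close> is reachable from its new entry \<open>s z\<close>.\<close>

lemma spath_iff_successively:
  "spath N TE a b p \<longleftrightarrow> p \<noteq> [] \<and> hd p = a \<and> last p = b \<and> distinct p \<and> set p \<subseteq> N \<and>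
     successively (\<lambda>x y. (x, y) \<in> TE) p"
  by (auto simp: spath_def successively_conv_nth)

lemma successively_shortens_to_spath:
  assumes "p \<noteq> []" and "set p \<subseteq> N" and "successively (\<lambda>x y. (x, y) \<in> TE) p"
  shows "\<exists>q. spath N TE (hd p) (last p) q \<and> set q \<subseteq> set p"
  using assms
proof (induction "length p" arbitrary: p rule: less_induct)
  case less
  show ?case
  proof (cases "distinct p")
    case True
    then show ?thesis using less.prems by (auto simp: spath_iff_successively)
  next
    case False
    then obtain as bs cs x where p: "p = as @ [x] @ bs @ [x] @ cs"
      using not_distinct_decomp by blast
    define p' where "p' = as @ x # cs"
    have "successively (\<lambda>x y. (x, y) \<in> TE) (x # cs)"
      using less.prems(3) successively_append_iff[of _ "as @ x # bs" "x # cs"] unfolding p by simp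
    then have "successively (\<lambda>x y. (x, y) \<in> TE) p'"
      using less.prems(3) unfolding p p'_def by (simp add: successively_append_iff)
    moreover have "length p' < length p" "hd p' = hd p" "last p' = last p" "set p' \<subseteq> set p"
      unfolding p p'_def by (cases as; auto)+
    ultimately show ?thesis using less.hyps[of p'] less.prems unfolding p'_def by fastforce
  qed
qed

lemma on_path_split:
  assumes T: "is_tree N TE" and "a \<in> N" "b \<in> N" "c \<in> N"
    and "on_path N TE a c t"
  shows "on_path N TE a b t \<or> on_path N TE b c t"
proof -
  obtain p where p: "spath N TE a b p" using T \<open>a \<in> N\<close> \<open>b \<in> N\<close> unfolding is_tree_def by blast
  obtain q where q: "spath N TE b c q" using T \<open>b \<in> N\<close> \<open>c \<in> N\<close> unfolding is_tree_def by blast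
  then obtain q' where q_split: "q = b # q'" by (cases q) (auto simp: spath_def)
  define r where "r = p @ q'"
  have "successively (\<lambda>x y. (x, y) \<in> TE) r"
    using p q unfolding r_def q_split spath_iff_successively
    by (auto simp: successively_append_iff successively_Cons)
  moreover have "r \<noteq> []" "hd r = a" "last r = c" "set r \<subseteq> set p \<union> set q"
    using p q unfolding r_def q_split spath_def by (cases q'; auto)+
  moreover have "set p \<union> set q \<subseteq> N" using p q unfolding spath_def by auto
  ultimately obtain r' where r': "spath N TE a c r'" "set r' \<subseteq> set p \<union> set q"
    using successively_shortens_to_spath[of r N TE] by fastforce
  moreover obtain r'' where "spath N TE a c r''" "t \<in> set r''"
    using \<open>on_path N TE a c t\<close> unfolding on_path_def by blast
  ultimately have "t \<in> set p \<or> t \<in> set q"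
    using T \<open>a \<in> N\<close> \<open>c \<in> N\<close> unfolding is_tree_def by blast
  then show ?thesis using p q unfolding on_path_def by blast
qed

lemma tree_decompD:
  assumes "tree_decomp V E N TE X"
  shows "is_tree N TE"
    and "t \<in> N \<Longrightarrow> X t \<subseteq> V"
    and "v \<in> V \<Longrightarrow> \<exists>t\<in>N. v \<in> X t"
    and "(u, v) \<in> E \<Longrightarrow> \<exists>t\<in>N. u \<in> X t \<and> v \<in> X t"
    and "t1 \<in> N \<Longrightarrow> t2 \<in> N \<Longrightarrow> t \<in> N \<Longrightarrow> on_path N TE t1 t2 t \<Longrightarrow> X t1 \<inter> X t2 \<subseteq> X t"
  using assms unfolding tree_decomp_def by (elim conjE; blast)+

lemma tree_decomp_connected_meets_path_bags:
  assumes td: "tree_decomp V E N TE X"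
    and "(x, y) \<in> (Restr E W)\<^sup>*" and "x \<in> W"
    and "t1 \<in> N" "t2 \<in> N" "t \<in> N" "x \<in> X t1" "y \<in> X t2" "on_path N TE t1 t2 t"
  shows "\<exists>z\<in>W. z \<in> X t"
  using assms(2-)
proof (induction arbitrary: t1 rule: converse_rtrancl_induct)
  case base
  then show ?case using tree_decompD(5)[OF td] by blast
next
  case (step x x')
  obtain t' where t': "t' \<in> N" "x \<in> X t'" "x' \<in> X t'"
    using tree_decompD(4)[OF td] step.hyps(1) by blast
  from on_path_split[OF tree_decompD(1)[OF td] \<open>t1 \<in> N\<close> \<open>t' \<in> N\<close> \<open>t2 \<in> N\<close> \<open>on_path N TE t1 t2 t\<close>]
  show ?case
  proof
    assume "on_path N TE t1 t' t"
    then have "x \<in> X t" using tree_decompD(5)[OF td \<open>t1 \<in> N\<close> \<open>t' \<in> N\<close> \<open>t \<in> N\<close>] step.prems t' by blast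
    then show ?thesis using step.prems by blast
  next
    assume "on_path N TE t' t2 t"
    then show ?thesis using step.IH step.hyps(1) step.prems t' by blast
  qed
qed

lemma rtrancl_Restr_if_interval_subset:
  assumes "(a, b) \<in> r\<^sup>*" and "\<And>x. (a, x) \<in> r\<^sup>* \<Longrightarrow> (x, b) \<in> r\<^sup>* \<Longrightarrow> x \<in> A"
  shows "(a, b) \<in> (Restr r A)\<^sup>*"
  using assms
proof (induction rule: rtrancl_induct)
  case (step b c)
  have "(a, b) \<in> (Restr r A)\<^sup>*"
  proof (rule step.IH)
    fix x assume "(a, x) \<in> r\<^sup>*" "(x, b) \<in> r\<^sup>*"
    then show "x \<in> A" using step.prems rtrancl_into_rtrancl[OF _ step.hyps(2)] by blast
  qed
  moreover have "b \<in> A" using step.prems step.hyps by blast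
  moreover have "c \<in> A" using step.prems rtrancl_into_rtrancl[OF step.hyps] by blast
  ultimately show ?case using step.hyps(2) by (blast intro: rtrancl_into_rtrancl)
qed simp

lemma sources_subset: "sources V D \<subseteq> V"
  unfolding sources_def by auto

lemma exists_source_reaching:
  assumes "finite D" "acyclic D" "D \<subseteq> V \<times> V" "w \<in> V"
  shows "\<exists>\<sigma>\<in>sources V D. (\<sigma>, w) \<in> D\<^sup>*"
proof -
  have "w \<in> {u. (u, w) \<in> D\<^sup>*}" by simp
  then obtain z where z: "(z, w) \<in> D\<^sup>*" and minimal: "\<And>y. (y, z) \<in> D \<Longrightarrow> (y, w) \<notin> D\<^sup>*"
    using wfE_min[OF finite_acyclic_wf[OF assms(1,2)]] by (metis mem_Collect_eq)
  have "(y, z) \<notin> D" for y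
    using minimal[of y] z converse_rtrancl_into_rtrancl by metis
  moreover have "z \<in> V"
    using z assms(3,4) by (cases rule: converse_rtranclE) auto
  ultimately show ?thesis using z unfolding sources_def by blast
qed

locale ranked_dag =
  fixes V :: "'a set" and D :: "('a \<times> 'a) set" and rank :: "'a \<Rightarrow> nat"
  assumes finite_vertices: "finite V"
    and arcs_subset: "D \<subseteq> V \<times> V"
    and acyclic_arcs: "acyclic D"
    and inj_rank: "inj_on rank V"
begin

definition canonical_source :: "'a \<Rightarrow> 'a" where
  "canonical_source w = arg_min_on rank {\<sigma> \<in> sources V D. (\<sigma>, w) \<in> D\<^sup>*}"

lemma reachable_in_vertices: "(a, x) \<in> D\<^sup>* \<Longrightarrow> a \<in> V \<Longrightarrow> x \<in> V"
  by (induction rule: rtrancl_induct) (use arcs_subset in auto)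

lemma finite_arcs: "finite D"
  using finite_vertices arcs_subset by (meson finite_SigmaI finite_subset)

lemma canonical_source_least:
  assumes "w \<in> V"
  shows "canonical_source w \<in> sources V D" "(canonical_source w, w) \<in> D\<^sup>*"
    and "\<And>\<sigma>. \<sigma> \<in> sources V D \<Longrightarrow> (\<sigma>, w) \<in> D\<^sup>* \<Longrightarrow> rank (canonical_source w) \<le> rank \<sigma>"
proof -
  let ?S = "{\<sigma> \<in> sources V D. (\<sigma>, w) \<in> D\<^sup>*}"
  have fin: "finite ?S" using finite_vertices sources_subset[of V D] by (auto intro: finite_subset)
  have ne: "?S \<noteq> {}"
    using exists_source_reaching[OF finite_arcs acyclic_arcs arcs_subset assms] by blast
  have "canonical_source w \<in> ?S"
    unfolding canonical_source_def by (rule arg_min_if_finite(1)[OF fin ne])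
  then show "canonical_source w \<in> sources V D" "(canonical_source w, w) \<in> D\<^sup>*" by auto
  show "rank (canonical_source w) \<le> rank \<sigma>" if "\<sigma> \<in> sources V D" "(\<sigma>, w) \<in> D\<^sup>*" for \<sigma>
    unfolding canonical_source_def by (rule arg_min_least[OF fin ne]) (use that in simp)
qed

lemma canonical_source_eqI:
  assumes "w \<in> V" "\<sigma> \<in> sources V D" "(\<sigma>, w) \<in> D\<^sup>*"
    and "\<And>\<sigma>'. \<sigma>' \<in> sources V D \<Longrightarrow> (\<sigma>', w) \<in> D\<^sup>* \<Longrightarrow> rank \<sigma> \<le> rank \<sigma>'"
  shows "canonical_source w = \<sigma>"
proof -
  have "rank (canonical_source w) = rank \<sigma>"
    using canonical_source_least[OF \<open>w \<in> V\<close>] assms by (meson le_antisym)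
  then show ?thesis
    using inj_rank canonical_source_least(1)[OF \<open>w \<in> V\<close>] assms(2) sources_subset[of V D]
    by (auto dest: inj_onD)
qed

lemma canonical_source_of_source:
  assumes "\<sigma> \<in> sources V D"
  shows "canonical_source \<sigma> = \<sigma>"
proof -
  have "\<sigma>' = \<sigma>" if "(\<sigma>', \<sigma>) \<in> D\<^sup>*" for \<sigma>'
    using that assms unfolding sources_def by (auto elim: rtranclE)
  then show ?thesis using assms sources_subset[of V D] by (intro canonical_source_eqI) auto
qed

lemma canonical_source_between:
  assumes "w \<in> V" "(canonical_source w, x) \<in> D\<^sup>*" "(x, w) \<in> D\<^sup>*"
  shows "canonical_source x = canonical_source w"
proof (rule canonical_source_eqI)
  show "canonical_source w \<in> sources V D" by (rule canonical_source_least(1)[OF \<open>w \<in> V\<close>])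
  then show "x \<in> V" using reachable_in_vertices[OF assms(2)] sources_subset[of V D] by blast
  show "rank (canonical_source w) \<le> rank \<sigma>" if "\<sigma> \<in> sources V D" "(\<sigma>, x) \<in> D\<^sup>*" for \<sigma>
    using canonical_source_least(3)[OF \<open>w \<in> V\<close> that(1) rtrancl_trans[OF that(2) assms(3)]] .
qed (rule assms(2))

lemma canonical_source_reach_connected:
  assumes "D \<subseteq> E" "sym E"
    and W_def: "W = {w \<in> V. (canonical_source w, v) \<in> D\<^sup>*}" and "w1 \<in> W" "w2 \<in> W"
  shows "(w1, w2) \<in> (Restr E W)\<^sup>*"
proof -
  let ?s = canonical_source
  have "(Restr D W)\<^sup>* \<subseteq> (Restr E W)\<^sup>*" using \<open>D \<subseteq> E\<close> by (intro rtrancl_mono) blast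
  moreover have sym: "sym ((Restr E W)\<^sup>*)" using \<open>sym E\<close> by (intro sym_rtrancl) (auto simp: sym_def)
  moreover have "(?s w, w) \<in> (Restr D W)\<^sup>*" "(?s w, v) \<in> (Restr D W)\<^sup>*" if "w \<in> W" for w
  proof -
    have wV: "w \<in> V" and sw_v: "(?s w, v) \<in> D\<^sup>*" using \<open>w \<in> W\<close> W_def by auto
    have sw_V: "?s w \<in> V" using canonical_source_least(1)[OF wV] sources_subset[of V D] by blast
    show "(?s w, w) \<in> (Restr D W)\<^sup>*"
    proof (rule rtrancl_Restr_if_interval_subset)
      show "(?s w, w) \<in> D\<^sup>*" by (rule canonical_source_least(2)[OF wV])
    next
      fix x assume "(?s w, x) \<in> D\<^sup>*" "(x, w) \<in> D\<^sup>*"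
      then show "x \<in> W"
        using canonical_source_between[OF wV] reachable_in_vertices sw_V sw_v W_def by auto
    qed
    show "(?s w, v) \<in> (Restr D W)\<^sup>*"
    proof (rule rtrancl_Restr_if_interval_subset[OF sw_v])
      fix x assume "(?s w, x) \<in> D\<^sup>*" "(x, v) \<in> D\<^sup>*"
      moreover from this have "x \<in> V" using reachable_in_vertices sw_V by blast
      ultimately show "x \<in> W"
        using canonical_source_least(2) W_def by (blast intro: rtrancl_trans)
    qed
  qed
  ultimately have "(w, v) \<in> (Restr E W)\<^sup>*" if "w \<in> W" for w
    using that by (blast intro: rtrancl_trans dest: symD)
  then show ?thesis using \<open>w1 \<in> W\<close> \<open>w2 \<in> W\<close> sym by (metis rtrancl_trans symD)
qed

lemma dag_tree_decomp_canonical_sources: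
  assumes td: "tree_decomp V E N TE X" and "D \<subseteq> E" "sym E"
  shows "dag_tree_decomp V D N TE (\<lambda>t. canonical_source ` X t)"
proof -
  let ?s = canonical_source
  note XV = tree_decompD(2)[OF td]
  have "?s ` X t \<subseteq> sources V D" if "t \<in> N" for t
    using XV[OF that] canonical_source_least(1) by blast
  moreover have "\<exists>t\<in>N. \<sigma> \<in> ?s ` X t" if src: "\<sigma> \<in> sources V D" for \<sigma>
  proof -
    obtain t where "t \<in> N" "\<sigma> \<in> X t"
      using tree_decompD(3)[OF td] src sources_subset[of V D] by blast
    then show ?thesis using canonical_source_of_source[OF src] by force
  qed
  moreover have "reach_set D (?s ` X t1) \<inter> reach_set D (?s ` X t2) \<subseteq> reach_set D (?s ` X t)"
    if t: "t1 \<in> N" "t2 \<in> N" "t \<in> N" "on_path N TE t1 t2 t" for t1 t2 t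
  proof
    fix v assume "v \<in> reach_set D (?s ` X t1) \<inter> reach_set D (?s ` X t2)"
    then obtain w1 w2 where w1: "w1 \<in> X t1" "(?s w1, v) \<in> D\<^sup>*"
      and w2: "w2 \<in> X t2" "(?s w2, v) \<in> D\<^sup>*"
      unfolding reach_set_def reach_def by auto
    define W where "W = {w \<in> V. (?s w, v) \<in> D\<^sup>*}"
    have "w1 \<in> W" "w2 \<in> W" using w1 w2 XV t unfolding W_def by blast+
    then have "(w1, w2) \<in> (Restr E W)\<^sup>*"
      by (rule canonical_source_reach_connected[OF \<open>D \<subseteq> E\<close> \<open>sym E\<close> W_def])
    then obtain z where "z \<in> W" "z \<in> X t"
      using tree_decomp_connected_meets_path_bags[OF td _ \<open>w1 \<in> W\<close> t(1-3) w1(1) w2(1) t(4)]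
      by blast
    then show "v \<in> reach_set D (?s ` X t)"
      unfolding reach_set_def reach_def W_def by blast
  qed
  ultimately show ?thesis using tree_decompD(1)[OF td] unfolding dag_tree_decomp_def by simp
qed

end

lemma is_tree_singleton: "is_tree {r} {}"
proof -
  have "spath {r} {} r r p \<longleftrightarrow> p = [r]" for p
    by (cases p) (auto simp: spath_def)
  then have "\<exists>!p. spath {r} {} r r p" by auto
  then show ?thesis unfolding is_tree_def by (simp add: irrefl_def)
qed

lemma treewidth_attained:
  assumes "E \<subseteq> V \<times> V"
  obtains N :: "nat set" and TE X k where "tree_decomp V E N TE X" "\<forall>t\<in>N. card (X t) \<le> k"
    and "treewidth V E = int k - 1"
proof -
  let ?fits = "\<lambda>k. \<exists>(N :: nat set) TE X. tree_decomp V E N TE X \<and> (\<forall>t\<in>N. card (X t) \<le> k)"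
  have "tree_decomp V E {0 :: nat} {} (\<lambda>_. V)"
    using assms is_tree_singleton unfolding tree_decomp_def by auto
  then have "?fits (card V)" by blast
  then have "?fits (LEAST k. ?fits k)" by (rule LeastI)
  then show ?thesis using that unfolding treewidth_def by blast
qed

lemma dag_treewidth_le:
  fixes N :: "nat set"
  assumes "dag_tree_decomp V D N TE X" and "\<forall>t\<in>N. card (X t) \<le> k"
  shows "dag_treewidth V D \<le> k"
  unfolding dag_treewidth_def by (rule Least_le) (use assms in blast)

theorem mainTheorem14:
  fixes V :: "'a set" and E D :: "('a \<times> 'a) set"
  assumes "ugraph V E"
    and "orientation E D"
    and "acyclic D"
  shows "int (dag_treewidth V D) \<le> treewidth V E + 1"
proof -
  have finV: "finite V" and EV: "E \<subseteq> V \<times> V" and "sym E"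
    using assms(1) unfolding ugraph_def by auto
  have DE: "D \<subseteq> E" using assms(2) unfolding orientation_def by auto
  obtain rank :: "'a \<Rightarrow> nat" where "inj_on rank V"
    using finite_imp_inj_to_nat_seg[OF finV] by blast
  then interpret ranked_dag V D rank
    using finV DE EV assms(3) by unfold_locales auto
  obtain N :: "nat set" and TE X k where td: "tree_decomp V E N TE X"
    and width: "\<forall>t\<in>N. card (X t) \<le> k" and tw: "treewidth V E = int k - 1"
    using treewidth_attained[OF EV] by blast
  have "card (canonical_source ` X t) \<le> k" if "t \<in> N" for t
    using tree_decompD(2)[OF td that] finV width that
    by (meson card_image_le finite_subset order_trans)
  then have "dag_treewidth V D \<le> k"
    using dag_treewidth_le[OF dag_tree_decomp_canonical_sources[OF td DE \<open>sym E\<close>]] by blast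
  then show ?thesis using tw by simp
qed

end
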